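(* Let $(X,L)$ be an exact cobordism with good ends, with positive end $(Y,\Lambda)$, and assume that the $(-\infty)$-boundary of $L$ is empty and $L$ is connected. Let $\epsilon$ be the augmentation of the contact homology algebra $\mathcal{A}(Y,\Lambda)$ induced by $L$. Then the natural map $Q'(\Lambda)\to \mathbf{V}(X,L)$, which sends a formal sum of covectors $c^*$ dual to Reeb chords $c$ (an element of $Q'(\Lambda)$) to the corresponding formal sum of Reeb chords $c$ in $\mathbf{V}(X,L)$, is a chain map (with respect to the dual of $\partial^\epsilon_1$ and $d^f$). Furthermore, if $(X,L)$ satisfies a monotonicity condition, i.e. there are constants $C_0$ and $C_1>0$ such that $|c|>C_1\mathfrak{a}(c)+C_0$ for every Reeb chord $c$ of $\Lambda$, then the induced map on homology \[ LCH^{*}(Y,\Lambda;\epsilon)\to E^{*}_{1}(X,L) \] is an isomorphism.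
   Context: Setting. $Y$ is a contact $(2n-1)$-manifold with contact form $\lambda$; a Reeb chord of a Legendrian $\Lambda\subset Y$ is a trajectory of the Reeb vector field of $\lambda$ starting and ending on $\Lambda$; its action is $\mathfrak{a}(c)=\int_c\lambda$. An exact cobordism $(X,L)$: $X$ is an exact symplectic $2n$-manifold which outside a compact set is symplectomorphic to $Y^+\times[0,\infty)\sqcup Y^-\times(-\infty,0]$ with symplectic forms $d(e^t\lambda^\pm)$, and $L\subset X$ is an exact Lagrangian submanifold which outside a compact set equals $\Lambda^+\times[0,\infty)\sqcup\Lambda^-\times(-\infty,0]$ for Legendrians $\Lambda^\pm\subset Y^\pm$. Standing assumptions: $X$ is simply connected, $c_1(TX)=0$, the Maslov class of $L$ vanishes, $\Lambda^+$ is generic w.r.t. the Reeb flow, and the ends are good (every moduli space of holomorphic spheres in $X$, resp. in $Y^-\times\mathbb{R}$, with positive puncture at a Reeb orbit of $Y^+$, resp. $Y^-$, has formal dimension $\ge 2$). A generic almost complex structure $J$ compatible with the symplectic form and adjusted (translation invariant, pairing Reeb field with $\partial_t$) in the ends is fixed. Coefficients are $\mathbb{Z}_2$; $|\mathcal{M}|$ denotes the mod 2 count of a compact $0$-manifold. Here $\Lambda^-=\emptyset$, $(Y,\Lambda)=(Y^+,\Lambda^+)$. For a Reeb chord $c$ of $\Lambda$, $\mathcal{M}(c)$ is the moduli space of $J$-holomorphic disks in $X$ with boundary on $L$ and one positive boundary puncture asymptotic to the strip over $c$; the grading is $|c|=\dim\mathcal{M}(c)$ (formal dimension; well defined by the standing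 assumptions). For chords $a,b_1,\dots,b_k$, $\mathcal{M}(a;b_1\dots b_k)$ is the moduli space of holomorphic disks in $Y\times\mathbb{R}$ with boundary on $\Lambda\times\mathbb{R}$, positive puncture at $a$, negative punctures at $b_1,\dots,b_k$ in boundary order; it has dimension $|a|-\sum|b_j|$, and $\widehat{\mathcal{M}}=\mathcal{M}/\mathbb{R}$. Contact homology: $\mathcal{A}(Y,\Lambda)$ is the unital algebra over $\mathbb{Z}_2$ generated by Reeb chords, with differential $\partial c=\sum_{\dim\mathcal{M}(c;\bar b)=1}|\widehat{\mathcal{M}}(c;\bar b)|\,\bar b$ extended by Leibniz rule. The augmentation induced by $L$ is the algebra map $\epsilon:\mathcal{A}(Y,\Lambda)\to\mathbb{Z}_2$, $\epsilon(c)=|\mathcal{M}(c)|$ if $\dim\mathcal{M}(c)=0$ and $0$ otherwise; it satisfies $\epsilon\circ\partial=0$. With $E_\epsilon(c)=c+\epsilon(c)$, $\partial^\epsilon=E_\epsilon\partial E_\epsilon^{-1}$ preserves the word-length filtration; its induced map on $Q(\Lambda)=\mathcal{A}_1/\mathcal{A}_2$ (the vector space with basis the Reeb chords) is $\partial^\epsilon_1$, with homology $LCH_*(Y,\Lambda;\epsilon)$. $Q'(\Lambda)=\mathrm{Hom}(Q(\Lambda),\mathbb{Z}_2)$ with the dual differential; its homology is $LCH^*(Y,\Lambda;\epsilon)$. Rational SFT in this case: $\mathbf{V}(X,L)$ is the $\mathbb{Z}$-graded $\mathbb{Z}_2$-vector space of formal sums of Reeb chords of $\Lambda$ containing only finitely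 many chords of action below any given number, graded by $|c|$. The differential is $d^f(c)=\sum_a\sum_{\dim\mathcal{M}(a;\bar b\,c\,\bar e)=1}|\widehat{\mathcal{M}}(a;\bar b\,c\,\bar e)|\,\epsilon(\bar b)\epsilon(\bar e)\,a$ (attach $c$ to a negative puncture of a rigid symplectization disk and cap the other negative punctures with rigid disks in $X$); it has degree $1$ and increases action. For $\alpha>0$, $\mathbf{V}_{[\alpha]}(X,L)$ is the quotient of $\mathbf{V}(X,L)$ by the subcomplex of sums of chords of action $\ge\alpha$, with induced differential $d^f_\alpha$, and $E_1^*(X,L)=\varprojlim_\alpha \ker d^f_\alpha/\mathrm{im}\,d^f_\alpha$. *)

theory Defs
  imports Complex_Main "HOL-Library.Z2"
begin

(* Reeb chords: elements of a type 'c.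
   act :: 'c => real       the action a(c)
   deg :: 'c => int        the grading |c| = dim M(c)
   M :: 'c => 'c list => bit   M a bs = |M^(a;bs)| if dim M(a;bs) = 1, and 0 otherwise
   eps :: 'c => bit        the augmentation on generators, eps c = |M(c)| if dim M(c)=0, else 0
   Elements of the algebra A(Y,Lambda) are coefficient functions on words (finite support). *)

type_synonym 'c alg = "'c list \<Rightarrow> bit"

definition epsw :: "('c \<Rightarrow> bit) \<Rightarrow> 'c list \<Rightarrow> bit" where
  "epsw eps w = prod_list (map eps w)"

definition eps_alg :: "('c \<Rightarrow> bit) \<Rightarrow> 'c alg \<Rightarrow> bit" where
  "eps_alg eps x = (\<Sum>w\<in>{w. x w \<noteq> 0}. x w * epsw eps w)"

definition gen :: "'c \<Rightarrow> 'c alg" where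
  "gen a = (\<lambda>v. if v = [a] then 1 else 0)"

definition dword :: "('c \<Rightarrow> 'c list \<Rightarrow> bit) \<Rightarrow> 'c list \<Rightarrow> 'c alg" where
  "dword M w = (\<lambda>v. \<Sum>i<length w. \<Sum>bs\<in>{bs. M (w ! i) bs \<noteq> 0}.
       if take i w @ bs @ drop (Suc i) w = v then M (w ! i) bs else 0)"

definition dalg :: "('c \<Rightarrow> 'c list \<Rightarrow> bit) \<Rightarrow> 'c alg \<Rightarrow> 'c alg" where
  "dalg M x = (\<lambda>v. \<Sum>w\<in>{w. x w \<noteq> 0}. x w * dword M w v)"

(* algebra map E_e with E_e(c) = c + e(c), applied to a word b_1...b_k =
   product of (b_i + e(b_i)), expanded *)
definition Eword :: "('c \<Rightarrow> bit) \<Rightarrow> 'c list \<Rightarrow> 'c alg" where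
  "Eword e w = (\<lambda>v. \<Sum>S\<in>Pow {..<length w}.
       if nths w S = v then (\<Prod>i\<in>{..<length w} - S. e (w ! i)) else 0)"

definition Ealg :: "('c \<Rightarrow> bit) \<Rightarrow> 'c alg \<Rightarrow> 'c alg" where
  "Ealg e x = (\<lambda>v. \<Sum>w\<in>{w. x w \<noteq> 0}. x w * Eword e w v)"

(* partial^eps = E_eps o partial o E_eps^{-1}, where E_eps^{-1}(c) = c - eps(c) *)
definition dEps :: "('c \<Rightarrow> 'c list \<Rightarrow> bit) \<Rightarrow> ('c \<Rightarrow> bit) \<Rightarrow> 'c alg \<Rightarrow> 'c alg" where
  "dEps M eps x = Ealg eps (dalg M (Ealg (\<lambda>c. - eps c) x))"

(* the induced map partial^eps_1 on Q(Lambda): coefficient of the chord c in partial^eps_1 a *)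
definition dEps1 :: "('c \<Rightarrow> 'c list \<Rightarrow> bit) \<Rightarrow> ('c \<Rightarrow> bit) \<Rightarrow> 'c \<Rightarrow> 'c \<Rightarrow> bit" where
  "dEps1 M eps a c = dEps M eps (gen a) [c]"

(* Q'(Lambda) = Hom(Q(Lambda), Z2): arbitrary functions 'c => bit (formal sums of c^* ).
   Dual differential: (delta f)(a) = f(partial^eps_1 a). *)
definition delta :: "('c \<Rightarrow> 'c list \<Rightarrow> bit) \<Rightarrow> ('c \<Rightarrow> bit) \<Rightarrow> ('c \<Rightarrow> bit) \<Rightarrow> ('c \<Rightarrow> bit)" where
  "delta M eps f = (\<lambda>a. \<Sum>c\<in>{c. dEps1 M eps a c \<noteq> 0}. dEps1 M eps a c * f c)"

definition Vset :: "('c \<Rightarrow> real) \<Rightarrow> ('c \<Rightarrow> bit) set" where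
  "Vset act = {f. \<forall>\<alpha>. finite {c. f c \<noteq> 0 \<and> act c < \<alpha>}}"

definition dfV :: "('c \<Rightarrow> 'c list \<Rightarrow> bit) \<Rightarrow> ('c \<Rightarrow> bit) \<Rightarrow> ('c \<Rightarrow> bit) \<Rightarrow> ('c \<Rightarrow> bit)" where
  "dfV M eps f = (\<lambda>a. \<Sum>w\<in>{w. M a w \<noteq> 0}. \<Sum>i<length w.
       M a w * epsw eps (take i w) * epsw eps (drop (Suc i) w) * f (w ! i))"

definition in_deg :: "('c \<Rightarrow> int) \<Rightarrow> int \<Rightarrow> ('c \<Rightarrow> bit) \<Rightarrow> bool" where
  "in_deg deg k f \<longleftrightarrow> (\<forall>c. f c \<noteq> 0 \<longrightarrow> deg c = k)"

(* LCH^k(Y,Lambda;eps) as a set of cohomology classes (cosets) *)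
definition lch_cocyc where
  "lch_cocyc deg M eps k f \<longleftrightarrow> in_deg deg k f \<and> delta M eps f = (\<lambda>_. 0)"

definition lch_cobound where
  "lch_cobound deg M eps k f \<longleftrightarrow> (\<exists>g. in_deg deg (k - 1) g \<and> f = delta M eps g)"

definition lch_class where
  "lch_class deg M eps k f =
     {f'. lch_cocyc deg M eps k f' \<and> lch_cobound deg M eps k (\<lambda>c. f c + f' c)}"

definition LCH where
  "LCH deg M eps k = {lch_class deg M eps k f | f. lch_cocyc deg M eps k f}"

(* V_[alpha] = V / {sums of chords of action >= alpha}, represented by formal sums
   supported on chords of action < alpha; projections are truncations *)
definition trunc :: "('c \<Rightarrow> real) \<Rightarrow> real \<Rightarrow> ('c \<Rightarrow> bit) \<Rightarrow> ('c \<Rightarrow> bit)" where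
  "trunc act \<alpha> f = (\<lambda>c. if act c < \<alpha> then f c else 0)"

definition below where
  "below act \<alpha> f \<longleftrightarrow> (\<forall>c. \<alpha> \<le> act c \<longrightarrow> f c = 0)"

definition va_cyc where
  "va_cyc act deg M eps \<alpha> k f \<longleftrightarrow> f \<in> Vset act \<and> below act \<alpha> f \<and> in_deg deg k f \<and>
     trunc act \<alpha> (dfV M eps f) = (\<lambda>_. 0)"

definition va_cobound where
  "va_cobound act deg M eps \<alpha> k f \<longleftrightarrow> (\<exists>g. g \<in> Vset act \<and> below act \<alpha> g \<and>
     in_deg deg (k - 1) g \<and> f = trunc act \<alpha> (dfV M eps g))"

definition va_class where
  "va_class act deg M eps \<alpha> k f =
     {f'. va_cyc act deg M eps \<alpha> k f' \<and> va_cobound act deg M eps \<alpha> k (\<lambda>c. f c + f' c)}"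

definition HV where
  "HV act deg M eps \<alpha> k = {va_class act deg M eps \<alpha> k f | f. va_cyc act deg M eps \<alpha> k f}"

(* E_1^k(X,L) = inverse limit over alpha > 0: compatible families of classes *)
definition E1 where
  "E1 act deg M eps k = {h. (\<forall>\<alpha>>0. h \<alpha> \<in> HV act deg M eps \<alpha> k) \<and> (\<forall>\<alpha>\<le>0. h \<alpha> = {}) \<and>
     (\<forall>\<alpha> \<beta>. 0 < \<alpha> \<and> \<alpha> \<le> \<beta> \<longrightarrow> (\<forall>f\<in>h \<beta>. trunc act \<alpha> f \<in> h \<alpha>))}"

(* map induced on homology by the natural map Q'(Lambda) -> V(X,L) (identity on
   coefficient functions), followed by the projections to V_[alpha] *)
definition Phi where
  "Phi act deg M eps k X = (\<lambda>\<alpha>. if 0 < \<alpha> then va_class act deg M eps \<alpha> k (trunc act \<alpha> (SOME f. f \<in> X)) else {})"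

end

theory Submission
  imports Defs
begin

(* Over Z2 we have E_{-eps} = E_eps, and E_eps sends the generator a
   to a + eps(a); since a word without letters has zero differential, this gives
   partial(E_eps^{-1} a) = partial a.  The linear part of E_eps applied to a word
   b_1...b_k is the sum over i of eps(b_1..b_{i-1}) eps(b_{i+1}..b_k) b_i, so the
   coefficient of c in partial^eps_1 a is exactly the count defining d^f.  Dualising
   (a finite sum, by the energy bound M_energy) gives d^f = delta.

   Since d^f increases action and has degree one, truncation below
   action alpha commutes with d^f, so the truncated complexes V_[alpha] form an inverse
   system.  Under the monotonicity condition, all chords of degree <= k+1 have action
   below some alpha0; for alpha >= alpha0 truncation does nothing in degrees k, k+1,
   hence H^k(V_[alpha]) = LCH^k.  An element of the inverse limit is therefore
   determined by its value at alpha0, and Phi is a bijection. *)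

(* Keep + and * on Z2 as ring operations instead of unfolding them to xor / and. *)
declare add_bit_eq_xor[simp del] mult_bit_eq_and[simp del]


lemma prod_list_nth: "prod_list (map e xs) = (\<Prod>j<length xs. e (xs ! j))"
  by (induct xs) (simp_all add: prod.lessThan_Suc_shift del: prod.lessThan_Suc)

lemma prod_except_nth:
  fixes e :: "'c \<Rightarrow> 'b::comm_monoid_mult"
  assumes i: "i < length w"
  shows "(\<Prod>j\<in>{..<length w} - {i}. e (w ! j))
           = prod_list (map e (take i w)) * prod_list (map e (drop (Suc i) w))"
proof -
  have split: "{..<length w} - {i} = {..<i} \<union> {Suc i..<length w}" using i by auto
  have prefix: "(\<Prod>j<i. e (w ! j)) = prod_list (map e (take i w))"
    using i by (simp add: prod_list_nth min_def)
  have "{Suc i..<length w} = {0 + Suc i..<(length w - Suc i) + Suc i}" using i by (metis Suc_leI add_0 le_add_diff_inverse2)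
  then have "(\<Prod>j\<in>{Suc i..<length w}. e (w ! j)) = (\<Prod>j\<in>{0..<length w - Suc i}. e (w ! (j + Suc i)))"
    by (simp only: prod.shift_bounds_nat_ivl)
  also have "\<dots> = prod_list (map e (drop (Suc i) w))"
    by (simp add: prod_list_nth atLeast0LessThan add.commute)
  finally have suffix: "(\<Prod>j\<in>{Suc i..<length w}. e (w ! j)) = prod_list (map e (drop (Suc i) w))" .
  have "(\<Prod>j\<in>{..<length w} - {i}. e (w ! j))
          = (\<Prod>j<i. e (w ! j)) * (\<Prod>j\<in>{Suc i..<length w}. e (w ! j))"
    unfolding split by (rule prod.union_disjoint) auto
  then show ?thesis using prefix suffix by simp
qed

lemma nths_eq_single:
  assumes "S \<subseteq> {..<length w}"
  shows "nths w S = [c] \<longleftrightarrow> (\<exists>i<length w. S = {i} \<and> w ! i = c)"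
proof
  assume h: "nths w S = [c]"
  have "{i. i < length w \<and> i \<in> S} = S" using assms by auto
  then have "card S = 1" using h length_nths[of w S] by simp
  then obtain i where S: "S = {i}" by (auto simp: card_Suc_eq)
  then have "i < length w" "set (nths w S) = {w ! i}" using assms by (auto simp: set_nths)
  then show "\<exists>i<length w. S = {i} \<and> w ! i = c" using S h by auto
next
  assume "\<exists>i<length w. S = {i} \<and> w ! i = c"
  then obtain i where i: "i < length w" "S = {i}" "w ! i = c" by blast
  then have "{j. j < length w \<and> j \<in> S} = {i}" by auto
  then have "length (nths w S) = 1" by (simp add: length_nths)
  moreover have "set (nths w S) = {c}" using i by (auto simp: set_nths)
  ultimately show "nths w S = [c]"
    by (metis length_Suc_conv length_0_conv One_nat_def list.set(2) list.simps(15) singleton_insert_inj_eq)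
qed


lemma Eword_single:
  "Eword e w [c] = (\<Sum>i<length w. if w ! i = c then epsw e (take i w) * epsw e (drop (Suc i) w) else 0)"
proof -
  let ?n = "length w"
  let ?g = "\<lambda>S. if nths w S = [c] then (\<Prod>i\<in>{..<?n} - S. e (w ! i)) else 0"
  have "Eword e w [c] = sum ?g (Pow {..<?n})" unfolding Eword_def by simp
  also have "\<dots> = sum ?g ((\<lambda>i. {i}) ` {..<?n})"
    by (rule sum.mono_neutral_right) (use nths_eq_single[of _ w c] in auto)
  also have "\<dots> = (\<Sum>i<?n. ?g {i})"
    by (rule sum.reindex_cong[where l = "\<lambda>i. {i}"]) (auto simp: inj_on_def)
  also have "\<dots> = (\<Sum>i<?n. if w ! i = c then epsw e (take i w) * epsw e (drop (Suc i) w) else 0)"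
  proof (rule sum.cong)
    fix i assume i: "i \<in> {..<?n}"
    then have "nths w {i} = [c] \<longleftrightarrow> w ! i = c" using nths_eq_single[of "{i}" w c] by auto
    then show "?g {i} = (if w ! i = c then epsw e (take i w) * epsw e (drop (Suc i) w) else 0)"
      using prod_except_nth[of i w e] i by (simp add: epsw_def)
  qed simp
  finally show ?thesis .
qed

lemma Eword_generator: "Eword e [a] v = (if v = [] then e a else 0) + (if v = [a] then 1 else 0)"
proof -
  have P: "Pow {..<length [a]} = {{}, {0}}" by (auto simp: Pow_def lessThan_def)
  show ?thesis unfolding Eword_def P by (subst sum.insert) (auto simp: lessThan_def)
qed

lemma Ealg_gen: "Ealg e (gen a) = Eword e [a]"
proof -
  have "{w. gen a w \<noteq> 0} = {[a]}" by (auto simp: gen_def)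
  then show ?thesis unfolding Ealg_def by (simp add: gen_def)
qed

lemma sum_supp_superset:
  fixes x :: "'a \<Rightarrow> 'b::semiring_0"
  assumes "finite S" "{w. x w \<noteq> 0} \<subseteq> S"
  shows "(\<Sum>w\<in>{w. x w \<noteq> 0}. x w * g w) = (\<Sum>w\<in>S. x w * g w)"
  by (rule sum.mono_neutral_left) (use assms finite_subset in auto)

(* The empty word is a cycle, so partial(E_e a) = partial a for every e; the differential
   of a generator is the moduli count M a itself. *)
lemma dalg_Eword_generator:
  assumes fin: "finite {bs. M a bs \<noteq> 0}"
  shows "dalg M (Eword e [a]) = M a"
proof
  fix v
  let ?x = "Eword e [a]"
  have "{w. ?x w \<noteq> 0} \<subseteq> {[], [a]}" by (auto simp: Eword_generator split: if_splits)
  then have "dalg M ?x v = (\<Sum>w\<in>{[], [a]}. ?x w * dword M w v)"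
    unfolding dalg_def by (rule sum_supp_superset[rotated]) simp
  also have "\<dots> = dword M [a] v"
    by (simp add: dword_def[of M "[]"] Eword_generator)
  also have "\<dots> = (\<Sum>bs\<in>{bs. M a bs \<noteq> 0}. if bs = v then M a bs else 0)"
    unfolding dword_def
    by (simp only: list.size add_0 sum.lessThan_Suc lessThan_0 sum.empty nth_Cons_0 take_0
        drop_Suc drop_0 list.sel(3) append_Nil append_Nil2)
  also have "\<dots> = M a v"
    using fin by (cases "M a v = 0") simp_all
  finally show "dalg M ?x v = M a v" .
qed


section \<open>Finiteness from the energy bound\<close>

lemma letter_act_less:
  fixes act :: "'c \<Rightarrow> real"
  assumes act_pos: "\<And>c. 0 < act c"
    and M_energy: "\<And>a bs. M a bs \<noteq> 0 \<Longrightarrow> sum_list (map act bs) < act a"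
    and "M a w \<noteq> 0" "c \<in> set w"
  shows "act c < act a"
proof -
  have "act c \<le> sum_list (map act w)"
    by (rule member_le_sum_list) (use assms(4) act_pos less_imp_le in auto)
  then show ?thesis using M_energy[OF assms(3)] by simp
qed

(* Only finitely many words occur in moduli spaces with a given positive puncture: their
   letters lie in a finite set and their length is bounded by act a / (minimal action). *)
lemma finite_moduli_words:
  fixes act :: "'c \<Rightarrow> real"
  assumes act_pos: "\<And>c. 0 < act c"
    and act_finite: "\<And>\<alpha>. finite {c. act c < \<alpha>}"
    and M_energy: "\<And>a bs. M a bs \<noteq> 0 \<Longrightarrow> sum_list (map act bs) < act a"
  shows "finite {bs. M a bs \<noteq> 0}"
proof -
  define A where "A = {c. act c < act a}"
  have fA: "finite A" using act_finite A_def by simp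
  have letters: "set bs \<subseteq> A" if "M a bs \<noteq> 0" for bs
    using letter_act_less[of act M, OF act_pos M_energy that] A_def by blast
  show ?thesis
  proof (cases "A = {}")
    case True
    then have "{bs. M a bs \<noteq> 0} \<subseteq> {[]}" using letters by fastforce
    then show ?thesis using finite_subset by blast
  next
    case False
    define d where "d = Min (act ` A)"
    have d_pos: "0 < d" using False fA act_pos d_def by auto
    define n where "n = nat \<lceil>act a / d\<rceil>"
    have "length bs \<le> n" if bs: "M a bs \<noteq> 0" for bs
    proof -
      have "real (length bs) * d \<le> sum_list (map act bs)"
        using letters[OF bs] fA d_def
        by (induct bs) (auto simp: algebra_simps intro!: add_mono)
      also have "\<dots> < act a" using M_energy[OF bs] .
      finally have "real (length bs) < act a / d" using d_pos by (simp add: field_simps)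
      then show ?thesis unfolding n_def by linarith
    qed
    then have "{bs. M a bs \<noteq> 0} \<subseteq> {xs. set xs \<subseteq> A \<and> length xs \<le> n}" using letters by blast
    then show ?thesis using finite_lists_length_le[OF fA, of n] finite_subset by blast
  qed
qed


section \<open>The natural map is a chain map\<close>

lemma sum_over_letters:
  fixes m :: "'c list \<Rightarrow> 'b::comm_semiring_1"
  assumes "finite B" "finite D" "\<And>w i. w \<in> B \<Longrightarrow> i < length w \<Longrightarrow> w ! i \<in> D"
  shows "(\<Sum>c\<in>D. (\<Sum>w\<in>B. m w * (\<Sum>i<length w. if w ! i = c then E w i else 0)) * f c)
       = (\<Sum>w\<in>B. \<Sum>i<length w. m w * E w i * f (w ! i))"
proof -
  have "(\<Sum>c\<in>D. (\<Sum>w\<in>B. m w * (\<Sum>i<length w. if w ! i = c then E w i else 0)) * f c)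
     = (\<Sum>c\<in>D. \<Sum>w\<in>B. \<Sum>i<length w. (if w ! i = c then m w * E w i * f c else 0))"
    by (simp add: sum_distrib_left sum_distrib_right mult.assoc if_distrib[where f = "\<lambda>x. m _ * x"]
        if_distrib[where f = "\<lambda>x. x * f _"] cong: if_cong)
  also have "\<dots> = (\<Sum>w\<in>B. \<Sum>i<length w. \<Sum>c\<in>D. (if w ! i = c then m w * E w i * f c else 0))"
    by (subst sum.swap) (simp add: sum.swap[where B = "{..<_}"])
  also have "\<dots> = (\<Sum>w\<in>B. \<Sum>i<length w. m w * E w i * f (w ! i))"
    using assms by (intro sum.cong refl) simp
  finally show ?thesis .
qed

(* The coefficient of c in partial^eps_1(a): rigid disks with positive puncture a, one
   negative puncture c left free and all others capped by the augmentation. *)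
lemma dEps1_expansion:
  assumes fin: "finite {bs. M a bs \<noteq> 0}"
  shows "dEps1 M eps a c = (\<Sum>w\<in>{bs. M a bs \<noteq> 0}. M a w *
           (\<Sum>i<length w. if w ! i = c then epsw eps (take i w) * epsw eps (drop (Suc i) w) else 0))"
proof -
  have "(\<lambda>c. - eps c) = eps" by simp
  then have "dEps M eps (gen a) = Ealg eps (M a)"
    unfolding dEps_def Ealg_gen dalg_Eword_generator[of M a, OF fin] by simp
  then show ?thesis by (simp add: dEps1_def Ealg_def Eword_single)
qed

lemma dfV_eq_delta:
  fixes act :: "'c \<Rightarrow> real"
  assumes act_pos: "\<And>c. 0 < act c"
    and act_finite: "\<And>\<alpha>. finite {c. act c < \<alpha>}"
    and M_energy: "\<And>a bs. M a bs \<noteq> 0 \<Longrightarrow> sum_list (map act bs) < act a"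
  shows "dfV M eps f = delta M eps f"
proof
  fix a
  define B where "B = {bs. M a bs \<noteq> 0}"
  define D where "D = {c. act c < act a}"
  define E where "E = (\<lambda>w i. epsw eps (take i w) * epsw eps (drop (Suc i) w))"
  have finB: "finite B" unfolding B_def by (rule finite_moduli_words[OF act_pos act_finite M_energy])
  have finD: "finite D" unfolding D_def by (rule act_finite)
  have inD: "w ! i \<in> D" if "w \<in> B" "i < length w" for w i
    using letter_act_less[of act M a w, OF act_pos M_energy] that unfolding B_def D_def by auto
  have coeff: "dEps1 M eps a c = (\<Sum>w\<in>B. M a w * (\<Sum>i<length w. if w ! i = c then E w i else 0))" for c
    using dEps1_expansion[of M a] finB unfolding B_def E_def by simp
  have "{c. dEps1 M eps a c \<noteq> 0} \<subseteq> D"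
  proof
    fix c assume "c \<in> {c. dEps1 M eps a c \<noteq> 0}"
    then have "(\<Sum>w\<in>B. M a w * (\<Sum>i<length w. if w ! i = c then E w i else 0)) \<noteq> 0"
      unfolding coeff by blast
    then obtain w where w: "w \<in> B" and "M a w * (\<Sum>i<length w. if w ! i = c then E w i else 0) \<noteq> 0"
      by (rule sum.not_neutral_contains_not_neutral)
    then have "(\<Sum>i<length w. if w ! i = c then E w i else 0) \<noteq> 0" by (metis mult_zero_right)
    then obtain i where "i \<in> {..<length w}" and "(if w ! i = c then E w i else 0) \<noteq> 0"
      by (rule sum.not_neutral_contains_not_neutral)
    then have "w \<in> B" "i < length w" "w ! i = c" using w by (auto split: if_splits)
    then show "c \<in> D" using inD by blast
  qed
  then have "delta M eps f a = (\<Sum>c\<in>D. dEps1 M eps a c * f c)"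
    unfolding delta_def by (rule sum_supp_superset[OF finD])
  also have "\<dots> = (\<Sum>w\<in>B. \<Sum>i<length w. M a w * E w i * f (w ! i))"
    unfolding coeff by (rule sum_over_letters[OF finB finD inD])
  also have "\<dots> = dfV M eps f a"
    by (simp add: dfV_def B_def E_def mult.assoc)
  finally show "dfV M eps f a = delta M eps f a" by simp
qed


section \<open>The truncated complexes\<close>

lemma bit_add_self: "(y::bit) + y = 0"
  by simp

locale cobordism_data =
  fixes act :: "'c \<Rightarrow> real" and deg :: "'c \<Rightarrow> int"
    and M :: "'c \<Rightarrow> 'c list \<Rightarrow> bit" and eps :: "'c \<Rightarrow> bit"
  assumes act_pos: "\<And>c. 0 < act c"
    and act_finite: "\<And>\<alpha>. finite {c. act c < \<alpha>}"
    and M_dim: "\<And>a bs. M a bs \<noteq> 0 \<Longrightarrow> deg a - sum_list (map deg bs) = 1"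
    and M_energy: "\<And>a bs. M a bs \<noteq> 0 \<Longrightarrow> sum_list (map act bs) < act a"
    and eps_deg: "\<And>c. eps c \<noteq> 0 \<Longrightarrow> deg c = 0"
begin

(* Since only finitely many chords lie below any action level, V(X,L) is all formal sums. *)
lemma Vset_all: "f \<in> Vset act"
  unfolding Vset_def by (auto intro: finite_subset[OF _ act_finite])

lemma delta_eq: "delta M eps f = dfV M eps f"
  using dfV_eq_delta[OF act_pos act_finite M_energy] by simp

(* d^f increases action: the coefficient of a only depends on f below action act a. *)
lemma dfV_local:
  assumes "\<And>c. act c < act a \<Longrightarrow> f c = g c"
  shows "dfV M eps f a = dfV M eps g a"
  unfolding dfV_def
proof (intro sum.cong refl)
  fix w i assume "w \<in> {w. M a w \<noteq> 0}" "i \<in> {..<length w}"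
  then have "act (w ! i) < act a" using letter_act_less[of act M a w, OF act_pos M_energy] by simp
  then show "M a w * epsw eps (take i w) * epsw eps (drop (Suc i) w) * f (w ! i) =
             M a w * epsw eps (take i w) * epsw eps (drop (Suc i) w) * g (w ! i)"
    using assms by simp
qed

lemma trunc_dfV: "trunc act \<alpha> (dfV M eps (trunc act \<alpha> g)) = trunc act \<alpha> (dfV M eps g)"
proof
  fix a
  show "trunc act \<alpha> (dfV M eps (trunc act \<alpha> g)) a = trunc act \<alpha> (dfV M eps g) a"
    using dfV_local[of a "trunc act \<alpha> g" g] by (simp add: trunc_def)
qed

lemma epsw_deg:
  assumes "epsw eps xs \<noteq> 0"
  shows "sum_list (map deg xs) = 0"
proof -
  have "\<forall>x\<in>set xs. eps x \<noteq> 0" using assms unfolding epsw_def by (auto simp: prod_list_zero_iff)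
  then show ?thesis by (induct xs) (auto simp: eps_deg)
qed

(* d^f has degree one, because capped punctures have degree zero. *)
lemma dfV_deg:
  assumes "in_deg deg k f"
  shows "in_deg deg (k + 1) (dfV M eps f)"
  unfolding in_deg_def
proof (intro allI impI)
  fix a assume "dfV M eps f a \<noteq> 0"
  then obtain w where w: "w \<in> {w. M a w \<noteq> 0}" and
    "(\<Sum>i<length w. M a w * epsw eps (take i w) * epsw eps (drop (Suc i) w) * f (w ! i)) \<noteq> 0"
    unfolding dfV_def by (rule sum.not_neutral_contains_not_neutral)
  then obtain i where i: "i < length w" and
    nz: "M a w * epsw eps (take i w) * epsw eps (drop (Suc i) w) * f (w ! i) \<noteq> 0"
    by (meson lessThan_iff sum.not_neutral_contains_not_neutral)
  then have capped: "epsw eps (take i w) \<noteq> 0" "epsw eps (drop (Suc i) w) \<noteq> 0"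
    and free: "f (w ! i) \<noteq> 0" by auto
  have "sum_list (map deg w)
          = sum_list (map deg (take i w)) + deg (w ! i) + sum_list (map deg (drop (Suc i) w))"
    using id_take_nth_drop[OF i] by (metis add.assoc map_append sum_list.Cons sum_list_append list.simps(9))
  also have "\<dots> = k"
    using epsw_deg[OF capped(1)] epsw_deg[OF capped(2)] free assms by (simp add: in_deg_def)
  finally show "deg a = k + 1" using M_dim[of a w] w by simp
qed

lemma dfV_add: "dfV M eps (\<lambda>c. f c + g c) = (\<lambda>a. dfV M eps f a + dfV M eps g a)"
  unfolding dfV_def by (simp add: sum.distrib distrib_left)

lemma cyc_trunc:
  assumes "in_deg deg k f" "\<And>a. act a < \<alpha> \<Longrightarrow> dfV M eps f a = 0"
  shows "va_cyc act deg M eps \<alpha> k (trunc act \<alpha> f)"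
  unfolding va_cyc_def trunc_dfV using assms Vset_all
  by (auto simp: below_def in_deg_def trunc_def)

lemma cyc_mono:
  assumes "va_cyc act deg M eps \<beta> k f" "\<alpha> \<le> \<beta>"
  shows "va_cyc act deg M eps \<alpha> k (trunc act \<alpha> f)"
proof (rule cyc_trunc)
  show "in_deg deg k f" using assms(1) by (simp add: va_cyc_def)
  fix a assume "act a < \<alpha>"
  then have "act a < \<beta>" using assms(2) by simp
  moreover have "trunc act \<beta> (dfV M eps f) a = 0" using assms(1) by (simp add: va_cyc_def)
  ultimately show "dfV M eps f a = 0" by (simp add: trunc_def)
qed

lemma cob_witness:
  assumes "in_deg deg (k - 1) g" "h = trunc act \<alpha> (dfV M eps g)"
  shows "va_cobound act deg M eps \<alpha> k h"
  unfolding va_cobound_def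
proof (intro exI[of _ "trunc act \<alpha> g"] conjI)
  show "h = trunc act \<alpha> (dfV M eps (trunc act \<alpha> g))" unfolding trunc_dfV by (rule assms(2))
qed (use assms(1) Vset_all in \<open>auto simp: below_def in_deg_def trunc_def\<close>)

lemma cob_trunc:
  assumes "va_cobound act deg M eps \<beta> k h" "\<alpha> \<le> \<beta>"
  shows "va_cobound act deg M eps \<alpha> k (trunc act \<alpha> h)"
proof -
  obtain g where g: "in_deg deg (k - 1) g" "h = trunc act \<beta> (dfV M eps g)"
    using assms(1) unfolding va_cobound_def by blast
  have "trunc act \<alpha> h = trunc act \<alpha> (dfV M eps g)"
    using g(2) assms(2) by (auto simp: trunc_def)
  then show ?thesis by (rule cob_witness[OF g(1)])
qed

lemma cob_add:
  assumes "va_cobound act deg M eps \<alpha> k u" "va_cobound act deg M eps \<alpha> k v"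
  shows "va_cobound act deg M eps \<alpha> k (\<lambda>c. u c + v c)"
proof -
  obtain g where g: "in_deg deg (k - 1) g" "u = trunc act \<alpha> (dfV M eps g)"
    using assms(1) unfolding va_cobound_def by blast
  obtain g' where g': "in_deg deg (k - 1) g'" "v = trunc act \<alpha> (dfV M eps g')"
    using assms(2) unfolding va_cobound_def by blast
  show ?thesis
  proof (rule cob_witness)
    show "in_deg deg (k - 1) (\<lambda>c. g c + g' c)"
      using g(1) g'(1) unfolding in_deg_def by (metis add_0)
    show "(\<lambda>c. u c + v c) = trunc act \<alpha> (dfV M eps (\<lambda>c. g c + g' c))"
      unfolding dfV_add g(2) g'(2) by (auto simp: trunc_def)
  qed
qed

lemma class_refl:
  assumes "va_cyc act deg M eps \<alpha> k f"
  shows "f \<in> va_class act deg M eps \<alpha> k f"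
proof -
  have "va_cobound act deg M eps \<alpha> k (\<lambda>c. f c + f c)"
    by (rule cob_witness[of k "\<lambda>_. 0"]) (auto simp: in_deg_def dfV_def trunc_def bit_add_self)
  then show ?thesis using assms by (simp add: va_class_def)
qed

lemma class_eq:
  assumes "va_cyc act deg M eps \<alpha> k f" "f' \<in> va_class act deg M eps \<alpha> k f"
  shows "va_class act deg M eps \<alpha> k f' = va_class act deg M eps \<alpha> k f"
proof -
  have shift: "va_class act deg M eps \<alpha> k f \<subseteq> va_class act deg M eps \<alpha> k f'"
    if "va_cobound act deg M eps \<alpha> k (\<lambda>c. f c + f' c)" for f f'
  proof
    fix x assume "x \<in> va_class act deg M eps \<alpha> k f"
    then have x: "va_cyc act deg M eps \<alpha> k x" "va_cobound act deg M eps \<alpha> k (\<lambda>c. f c + x c)"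
      by (auto simp: va_class_def)
    have "va_cobound act deg M eps \<alpha> k (\<lambda>c. (f c + f' c) + (f c + x c))" by (rule cob_add[OF that x(2)])
    moreover have "(\<lambda>c. (f c + f' c) + (f c + x c)) = (\<lambda>c. f' c + x c)"
      by (simp add: fun_eq_iff ac_simps bit_add_self)
    ultimately show "x \<in> va_class act deg M eps \<alpha> k f'" using x(1) by (simp add: va_class_def)
  qed
  have "va_cobound act deg M eps \<alpha> k (\<lambda>c. f c + f' c)" using assms(2) by (simp add: va_class_def)
  moreover then have "va_cobound act deg M eps \<alpha> k (\<lambda>c. f' c + f c)" by (simp add: add.commute)
  ultimately show ?thesis using shift by blast
qed

lemma HV_member_class:
  assumes "C \<in> HV act deg M eps \<alpha> k" "g \<in> C"
  shows "C = va_class act deg M eps \<alpha> k g"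
proof -
  obtain f where f: "C = va_class act deg M eps \<alpha> k f" "va_cyc act deg M eps \<alpha> k f"
    using assms(1) unfolding HV_def by blast
  then show ?thesis using class_eq[OF f(2)] assms(2) by simp
qed


section \<open>Stabilisation above the monotonicity bound\<close>

lemma deg_below:
  assumes bnd: "\<And>c. deg c \<le> k + 1 \<Longrightarrow> act c < \<alpha>" and "in_deg deg j f" "j \<le> k + 1"
  shows "trunc act \<alpha> f = f" "below act \<alpha> f"
proof -
  have "f c = 0" if "\<not> act c < \<alpha>" for c
    using assms bnd[of c] that unfolding in_deg_def by force
  then show "trunc act \<alpha> f = f" "below act \<alpha> f" by (auto simp: trunc_def below_def)
qed

lemma va_cyc_iff:
  assumes bnd: "\<And>c. deg c \<le> k + 1 \<Longrightarrow> act c < \<alpha>"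
  shows "va_cyc act deg M eps \<alpha> k f \<longleftrightarrow> lch_cocyc deg M eps k f"
proof -
  have "trunc act \<alpha> (dfV M eps f) = dfV M eps f \<and> below act \<alpha> f" if "in_deg deg k f"
    using deg_below[OF bnd dfV_deg[OF that]] deg_below[OF bnd that] by simp
  then show ?thesis by (auto simp: va_cyc_def lch_cocyc_def delta_eq Vset_all)
qed

lemma va_cobound_iff:
  assumes bnd: "\<And>c. deg c \<le> k + 1 \<Longrightarrow> act c < \<alpha>"
  shows "va_cobound act deg M eps \<alpha> k h \<longleftrightarrow> lch_cobound deg M eps k h"
proof -
  have trunc_id: "trunc act \<alpha> (dfV M eps g) = dfV M eps g" if "in_deg deg (k - 1) g" for g
    using deg_below(1)[OF bnd dfV_deg[OF that]] by simp
  show ?thesis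
  proof
    assume "va_cobound act deg M eps \<alpha> k h"
    then show "lch_cobound deg M eps k h"
      unfolding va_cobound_def lch_cobound_def delta_eq using trunc_id by auto
  next
    assume "lch_cobound deg M eps k h"
    then obtain g where "in_deg deg (k - 1) g" "h = dfV M eps g"
      unfolding lch_cobound_def delta_eq by blast
    then show "va_cobound act deg M eps \<alpha> k h" using cob_witness trunc_id by metis
  qed
qed

lemma va_class_eq_lch_class:
  assumes bnd: "\<And>c. deg c \<le> k + 1 \<Longrightarrow> act c < \<alpha>"
  shows "va_class act deg M eps \<alpha> k f = lch_class deg M eps k f"
  unfolding va_class_def lch_class_def using va_cyc_iff[OF bnd] va_cobound_iff[OF bnd] by simp

lemma LCH_representative:
  assumes bnd: "\<And>c. deg c \<le> k + 1 \<Longrightarrow> act c < \<alpha>0"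
    and X: "X \<in> LCH deg M eps k"
  shows "(SOME f. f \<in> X) \<in> X" "lch_cocyc deg M eps k (SOME f. f \<in> X)"
    "X = lch_class deg M eps k (SOME f. f \<in> X)"
proof -
  obtain f where f: "X = lch_class deg M eps k f" "lch_cocyc deg M eps k f"
    using X unfolding LCH_def by blast
  have cyc: "va_cyc act deg M eps \<alpha>0 k f" using va_cyc_iff[OF bnd] f(2) by simp
  have X_va: "X = va_class act deg M eps \<alpha>0 k f" using f(1) va_class_eq_lch_class[OF bnd] by simp
  have X_HV: "X \<in> HV act deg M eps \<alpha>0 k" using X_va cyc unfolding HV_def by blast
  show x: "(SOME f. f \<in> X) \<in> X" using class_refl[OF cyc] X_va by (metis someI)
  then show "lch_cocyc deg M eps k (SOME f. f \<in> X)" using f(1) by (simp add: lch_class_def)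
  show "X = lch_class deg M eps k (SOME f. f \<in> X)"
    using HV_member_class[OF X_HV x] va_class_eq_lch_class[OF bnd] by simp
qed

lemma Phi_above:
  assumes bnd: "\<And>c. deg c \<le> k + 1 \<Longrightarrow> act c < \<alpha>0" and pos: "0 < \<alpha>0"
    and X: "X \<in> LCH deg M eps k" and le: "\<alpha>0 \<le> \<alpha>"
  shows "Phi act deg M eps k X \<alpha> = X"
proof -
  have bnd': "\<And>c. deg c \<le> k + 1 \<Longrightarrow> act c < \<alpha>" using bnd le by (meson less_le_trans)
  have "in_deg deg k (SOME f. f \<in> X)" using LCH_representative(2)[OF bnd X] by (simp add: lch_cocyc_def)
  then show ?thesis
    using deg_below(1)[OF bnd'] pos le LCH_representative(3)[OF bnd X] va_class_eq_lch_class[OF bnd']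
    by (simp add: Phi_def)
qed

lemma Phi_in_E1:
  assumes bnd: "\<And>c. deg c \<le> k + 1 \<Longrightarrow> act c < \<alpha>0"
    and X: "X \<in> LCH deg M eps k"
  shows "Phi act deg M eps k X \<in> E1 act deg M eps k"
proof -
  let ?x = "SOME f. f \<in> X"
  have x: "in_deg deg k ?x" "dfV M eps ?x = (\<lambda>_. 0)"
    using LCH_representative(2)[OF bnd X] by (auto simp: lch_cocyc_def delta_eq)
  have cyc: "va_cyc act deg M eps \<alpha> k (trunc act \<alpha> ?x)" for \<alpha>
    by (rule cyc_trunc[OF x(1)]) (simp add: x(2))
  have compatible: "trunc act \<alpha> f \<in> Phi act deg M eps k X \<alpha>"
    if ab: "0 < \<alpha>" "\<alpha> \<le> \<beta>" and f: "f \<in> Phi act deg M eps k X \<beta>" for \<alpha> \<beta> f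
  proof -
    have f': "va_cyc act deg M eps \<beta> k f"
      "va_cobound act deg M eps \<beta> k (\<lambda>c. trunc act \<beta> ?x c + f c)"
      using f ab by (auto simp: Phi_def va_class_def)
    have "trunc act \<alpha> (\<lambda>c. trunc act \<beta> ?x c + f c) = (\<lambda>c. trunc act \<alpha> ?x c + trunc act \<alpha> f c)"
      using ab by (auto simp: trunc_def)
    then show ?thesis
      using cyc_mono[OF f'(1) ab(2)] cob_trunc[OF f'(2) ab(2)] ab by (simp add: Phi_def va_class_def)
  qed
  show ?thesis
    unfolding E1_def using cyc compatible by (auto simp: Phi_def HV_def)
qed

lemma E1_above:
  assumes bnd: "\<And>c. deg c \<le> k + 1 \<Longrightarrow> act c < \<alpha>0" and pos: "0 < \<alpha>0"
    and h: "h \<in> E1 act deg M eps k" and le: "\<alpha>0 \<le> \<alpha>"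
  shows "h \<alpha> = h \<alpha>0"
proof -
  have bnd': "\<And>c. deg c \<le> k + 1 \<Longrightarrow> act c < \<alpha>" using bnd le by (meson less_le_trans)
  have HV: "h \<beta> \<in> HV act deg M eps \<beta> k" if "0 < \<beta>" for \<beta> using h that by (simp add: E1_def)
  obtain g where g: "h \<alpha> = va_class act deg M eps \<alpha> k g" "va_cyc act deg M eps \<alpha> k g"
    using HV[of \<alpha>] pos le unfolding HV_def by auto
  have "trunc act \<alpha>0 g \<in> h \<alpha>0"
    using h pos le class_refl[OF g(2)] g(1) unfolding E1_def by blast
  moreover have "trunc act \<alpha>0 g = g" using deg_below(1)[OF bnd, where j = k and f = g] g(2) by (simp add: va_cyc_def)
  ultimately have "h \<alpha>0 = va_class act deg M eps \<alpha>0 k g" using HV_member_class HV pos by simp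
  then show ?thesis using g(1) va_class_eq_lch_class[OF bnd] va_class_eq_lch_class[OF bnd'] by simp
qed

lemma E1_eq_Phi:
  assumes bnd: "\<And>c. deg c \<le> k + 1 \<Longrightarrow> act c < \<alpha>0" and pos: "0 < \<alpha>0"
    and h: "h \<in> E1 act deg M eps k"
  shows "h \<alpha>0 \<in> LCH deg M eps k" "Phi act deg M eps k (h \<alpha>0) = h"
proof -
  have HV: "\<And>\<alpha>. 0 < \<alpha> \<Longrightarrow> h \<alpha> \<in> HV act deg M eps \<alpha> k"
    and empty: "\<And>\<alpha>. \<alpha> \<le> 0 \<Longrightarrow> h \<alpha> = {}"
    and compat: "\<And>\<alpha> \<beta> f. 0 < \<alpha> \<Longrightarrow> \<alpha> \<le> \<beta> \<Longrightarrow> f \<in> h \<beta> \<Longrightarrow> trunc act \<alpha> f \<in> h \<alpha>"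
    using h unfolding E1_def by blast+
  obtain f where "h \<alpha>0 = va_class act deg M eps \<alpha>0 k f" "va_cyc act deg M eps \<alpha>0 k f"
    using HV[OF pos] unfolding HV_def by blast
  then have "h \<alpha>0 = lch_class deg M eps k f" "lch_cocyc deg M eps k f"
    using va_cyc_iff[OF bnd] va_class_eq_lch_class[OF bnd] by simp_all
  then show X: "h \<alpha>0 \<in> LCH deg M eps k" unfolding LCH_def by blast
  show "Phi act deg M eps k (h \<alpha>0) = h"
  proof
    fix \<alpha> :: real
    consider "\<alpha> \<le> 0" | "0 < \<alpha>" "\<alpha> \<le> \<alpha>0" | "\<alpha>0 \<le> \<alpha>" by linarith
    then show "Phi act deg M eps k (h \<alpha>0) \<alpha> = h \<alpha>"
    proof cases
      case 1
      then show ?thesis using empty by (simp add: Phi_def)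
    next
      case 2
      then have "trunc act \<alpha> (SOME f. f \<in> h \<alpha>0) \<in> h \<alpha>"
        using compat LCH_representative(1)[OF bnd X] by blast
      then show ?thesis using HV_member_class[OF HV] 2 by (simp add: Phi_def)
    next
      case 3
      then show ?thesis using Phi_above[OF bnd pos X 3] E1_above[OF bnd pos h 3] by simp
    qed
  qed
qed

(* Above the bound, evaluation at alpha0 inverts Phi. *)
lemma Phi_bij:
  assumes bnd: "\<And>c. deg c \<le> k + 1 \<Longrightarrow> act c < \<alpha>0" and pos: "0 < \<alpha>0"
  shows "bij_betw (Phi act deg M eps k) (LCH deg M eps k) (E1 act deg M eps k)"
proof (rule bij_betw_byWitness[where f' = "\<lambda>h. h \<alpha>0"])
  show "\<forall>X\<in>LCH deg M eps k. Phi act deg M eps k X \<alpha>0 = X" using Phi_above[OF bnd pos] by simp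
  show "\<forall>h\<in>E1 act deg M eps k. Phi act deg M eps k (h \<alpha>0) = h" using E1_eq_Phi[OF bnd pos] by simp
  show "Phi act deg M eps k ` LCH deg M eps k \<subseteq> E1 act deg M eps k" using Phi_in_E1[OF bnd] by blast
  show "(\<lambda>h. h \<alpha>0) ` E1 act deg M eps k \<subseteq> LCH deg M eps k" using E1_eq_Phi(1)[OF bnd pos] by blast
qed

end

lemma monotonicity_action_bound:
  fixes act :: "'c \<Rightarrow> real" and deg :: "'c \<Rightarrow> int"
  assumes C1: "0 < C1" and mono: "\<And>c. real_of_int (deg c) > C1 * act c + C0"
  obtains \<alpha>0 where "0 < \<alpha>0" "\<And>c. deg c \<le> k + 1 \<Longrightarrow> act c < \<alpha>0"
proof
  show "0 < max 1 ((real_of_int k + 1 - C0) / C1)" by simp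
  fix c assume "deg c \<le> k + 1"
  then have "C1 * act c < real_of_int k + 1 - C0" using mono[of c] by linarith
  then have "act c < (real_of_int k + 1 - C0) / C1" using C1 by (simp add: field_simps)
  then show "act c < max 1 ((real_of_int k + 1 - C0) / C1)" by simp
qed

theorem theorem1p1:
  fixes act :: "'c \<Rightarrow> real" and deg :: "'c \<Rightarrow> int"
    and M :: "'c \<Rightarrow> 'c list \<Rightarrow> bit" and eps :: "'c \<Rightarrow> bit"
  assumes act_pos: "\<And>c. 0 < act c"
    and act_finite: "\<And>\<alpha>. finite {c. act c < \<alpha>}"
    and M_dim: "\<And>a bs. M a bs \<noteq> 0 \<Longrightarrow> deg a - sum_list (map deg bs) = 1"
    and M_energy: "\<And>a bs. M a bs \<noteq> 0 \<Longrightarrow> sum_list (map act bs) < act a"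
    and d_squared: "\<And>a. dalg M (dalg M (gen a)) = (\<lambda>_. 0)"
    and eps_deg: "\<And>c. eps c \<noteq> 0 \<Longrightarrow> deg c = 0"
    and eps_chain: "\<And>a. eps_alg eps (dalg M (gen a)) = 0"
  shows "(\<forall>f. f \<in> Vset act \<and> dfV M eps f = delta M eps f) \<and>
         ((\<exists>C0 C1. 0 < C1 \<and> (\<forall>c. real_of_int (deg c) > C1 * act c + C0)) \<longrightarrow>
            (\<forall>k. bij_betw (Phi act deg M eps k) (LCH deg M eps k) (E1 act deg M eps k)))"
proof -
  interpret cobordism_data act deg M eps
    by unfold_locales (fact act_pos act_finite M_dim M_energy eps_deg)+
  have bij: "bij_betw (Phi act deg M eps k) (LCH deg M eps k) (E1 act deg M eps k)"
    if C1: "0 < C1" and mono: "\<forall>c. real_of_int (deg c) > C1 * act c + C0" for C0 C1 k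
  proof -
    obtain \<alpha>0 where "0 < \<alpha>0" "\<And>c. deg c \<le> k + 1 \<Longrightarrow> act c < \<alpha>0"
      using monotonicity_action_bound[where deg = deg and act = act and k = k, OF C1] mono by blast
    then show ?thesis by (rule Phi_bij[rotated])
  qed
  show ?thesis using Vset_all delta_eq bij by metis
qed

end
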